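(* Let $A\in\mathbb R^{d\times d}$ and suppose there is $\omega_*\in\mathbb R^d$, $\omega_*\ne0$, with $A\omega_*=A^{\mathsf T}\omega_*=0$. For any $c\in\mathbb R$ define $\tilde{\mathcal E}(\omega):=c-\langle\omega_*,\omega\rangle$ and $$\tilde{\mathbb J}(\omega):=\frac{1}{2|\omega_*|^2}\Big(\omega_*\otimes(A\omega)-(A\omega)\otimes\omega_*\Big).$$ Then the linear ODE $\dot\omega=\frac12A\omega$ admits the Hamiltonian system $(\mathbb R^d,\tilde{\mathcal E},\tilde{\mathbb J})$: $\tilde{\mathbb J}(\omega)$ is skew-symmetric for every $\omega$, the bracket $\{\mathcal G_1,\mathcal G_2\}(\omega):=\langle D\mathcal G_1(\omega),\tilde{\mathbb J}(\omega)D\mathcal G_2(\omega)\rangle$ satisfies the Jacobi identity for all $C^2$ functions $\mathcal G_1,\mathcal G_2,\mathcal G_3:\mathbb R^d\to\mathbb R$, and $\frac12A\omega=\tilde{\mathbb J}(\omega)D\tilde{\mathcal E}(\omega)$ for all $\omega\in\mathbb R^d$.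
   Context: $\langle\cdot,\cdot\rangle$ is the Euclidean inner product, $|\cdot|$ the Euclidean norm, $D$ the gradient, and $a\otimes b$ the outer product, i.e. the matrix with $(a\otimes b)v=\langle b,v\rangle a$. *)

theory Defs
  imports "HOL-Analysis.Analysis"
begin

definition outer :: "real^'n \<Rightarrow> real^'n \<Rightarrow> real^'n^'n" where
  "outer a b = (\<chi> i j. a $ i * b $ j)"

definition grad :: "(real^'n \<Rightarrow> real) \<Rightarrow> real^'n \<Rightarrow> real^'n" where
  "grad f x = (\<chi> i. frechet_derivative f (at x) (axis i 1))"

definition C2 :: "(real^'n \<Rightarrow> real) \<Rightarrow> bool" where
  "C2 f \<longleftrightarrow> (\<forall>x. f differentiable (at x)) \<and>
     (\<forall>x. (grad f) differentiable (at x)) \<and>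
     (\<forall>i j. continuous_on UNIV (\<lambda>x. grad (\<lambda>y. grad f y $ i) x $ j))"

definition bracket :: "(real^'n \<Rightarrow> real^'n^'n) \<Rightarrow> (real^'n \<Rightarrow> real) \<Rightarrow> (real^'n \<Rightarrow> real) \<Rightarrow> real^'n \<Rightarrow> real" where
  "bracket J G1 G2 x = grad G1 x \<bullet> (J x *v grad G2 x)"

end

theory Submission
  imports Defs
begin

(* With u = w0, b = A w and k = 1 / (2 |w0|^2), the bracket is
   {F, G} = k (D_u F * D_b G - D_b F * D_u G), built from the derivations along the constant
   field u and the linear field w |-> A w.  Their commutator is the derivation along A u = 0, so,
   by the symmetry of second derivatives, they commute; this is what makes the Jacobi identity
   hold.  Since D E = - w0 is orthogonal to A w (because A^T w0 = 0),
   J w (D E w) = k |w0|^2 A w = A w / 2. *)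

lemma linear_eq_inner_axis_images:
  fixes L :: "real^'n \<Rightarrow> real"
  assumes "linear L"
  shows "(\<chi> i. L (axis i 1)) \<bullet> v = L v"
proof -
  have "L v = L (\<Sum>i\<in>UNIV. v$i *\<^sub>R axis i 1)"
    using basis_expansion[of v] by (simp add: scalar_mult_eq_scaleR)
  also have "\<dots> = (\<Sum>i\<in>UNIV. v$i * L (axis i 1))"
    using assms by (simp add: linear_sum linear_scale)
  finally show ?thesis by (simp add: inner_vec_def mult.commute)
qed

lemma grad_eq_axis_images:
  assumes "(f has_derivative D) (at x)"
  shows "grad f x = (\<chi> i. D (axis i 1))"
  using frechet_derivative_at[OF assms] by (simp add: grad_def)

lemma inner_grad_eq:
  assumes "(f has_derivative D) (at x)"
  shows "grad f x \<bullet> v = D v"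
  using linear_eq_inner_axis_images[OF has_derivative_linear[OF assms]]
  by (simp add: grad_eq_axis_images[OF assms])

lemma grad_eqI:
  assumes "(f has_derivative (\<lambda>v. g \<bullet> v)) (at x)"
  shows "grad f x = g"
  using grad_eq_axis_images[OF assms] by (simp add: vec_eq_iff inner_axis)

lemma has_derivative_grad:
  assumes "f differentiable (at x)"
  shows "(f has_derivative (\<lambda>v. grad f x \<bullet> v)) (at x)"
proof -
  have D: "(f has_derivative frechet_derivative f (at x)) (at x)"
    using assms frechet_derivative_works by blast
  then have "(\<lambda>v. grad f x \<bullet> v) = frechet_derivative f (at x)"
    using inner_grad_eq by blast
  with D show ?thesis by simp
qed

lemma gradient_increment_estimate:
  fixes g :: "'a::real_inner \<Rightarrow> 'a"
  assumes L: "linear L"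
    and r: "\<And>y. norm (y - x) < d \<Longrightarrow> norm (g y - g x - L (y - x)) \<le> e * norm (y - x)"
    and e: "0 \<le> e" and s: "0 \<le> s" "s \<le> h" and hd: "h * (2 * norm a + norm b) < d"
  shows "\<bar>(g (x + s *\<^sub>R a + h *\<^sub>R b) - g (x + s *\<^sub>R a)) \<bullet> a - h * (a \<bullet> L b)\<bar>
           \<le> h * (e * norm a * (2 * norm a + norm b))"
proof -
  define r1 where "r1 = g (x + s *\<^sub>R a + h *\<^sub>R b) - g x - L (s *\<^sub>R a + h *\<^sub>R b)"
  define r2 where "r2 = g (x + s *\<^sub>R a) - g x - L (s *\<^sub>R a)"
  have h: "0 \<le> h" using s by linarith
  have n1: "norm (s *\<^sub>R a + h *\<^sub>R b) \<le> h * norm a + h * norm b"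
    using norm_triangle_ineq[of "s *\<^sub>R a" "h *\<^sub>R b"] mult_right_mono[OF s(2) norm_ge_zero[of a]] s h
    by simp
  have n2: "norm (s *\<^sub>R a) \<le> h * norm a"
    using mult_right_mono[OF s(2) norm_ge_zero[of a]] s by simp
  have "h * norm a + h * norm b \<le> h * (2 * norm a + norm b)"
    using h by (simp add: algebra_simps)
  then have "norm r1 \<le> e * norm (s *\<^sub>R a + h *\<^sub>R b)"
    using r[of "x + s *\<^sub>R a + h *\<^sub>R b"] n1 hd unfolding r1_def by (simp add: add.assoc)
  also have "\<dots> \<le> e * (h * norm a + h * norm b)" using n1 e by (rule mult_left_mono)
  finally have r1: "norm r1 \<le> e * (h * norm a + h * norm b)" .
  have "h * norm a \<le> h * (2 * norm a + norm b)"
    using h by (simp add: algebra_simps)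
  then have "norm r2 \<le> e * norm (s *\<^sub>R a)"
    using r[of "x + s *\<^sub>R a"] n2 hd unfolding r2_def by simp
  also have "\<dots> \<le> e * (h * norm a)" using n2 e by (rule mult_left_mono)
  finally have r2: "norm r2 \<le> e * (h * norm a)" .
  have "L (s *\<^sub>R a + h *\<^sub>R b) = L (s *\<^sub>R a) + h *\<^sub>R L b"
    using L by (simp add: linear_add linear_scale)
  then have "(g (x + s *\<^sub>R a + h *\<^sub>R b) - g (x + s *\<^sub>R a)) \<bullet> a - h * (a \<bullet> L b) = (r1 - r2) \<bullet> a"
    unfolding r1_def r2_def by (simp add: inner_diff_left inner_diff_right inner_commute)
  also have "\<bar>\<dots>\<bar> \<le> norm (r1 - r2) * norm a"
    by (rule Cauchy_Schwarz_ineq2)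
  also have "\<dots> \<le> (norm r1 + norm r2) * norm a"
    by (intro mult_right_mono norm_triangle_ineq4) simp
  also have "\<dots> \<le> (e * (h * norm a + h * norm b) + e * (h * norm a)) * norm a"
    using r1 r2 by (intro mult_right_mono add_mono) auto
  also have "\<dots> = h * (e * norm a * (2 * norm a + norm b))"
    by (simp add: algebra_simps)
  finally show ?thesis .
qed

text \<open>The mean value theorem applied to
  \<open>s \<mapsto> f (x + s a + h b) - f (x + s a) - s h \<langle>a, L b\<rangle>\<close> on \<open>[0, h]\<close>.\<close>
lemma second_difference_estimate:
  fixes f :: "'a::real_inner \<Rightarrow> real"
  assumes df: "\<And>y. (f has_derivative (\<lambda>v. g y \<bullet> v)) (at y)"
    and L: "linear L"
    and r: "\<And>y. norm (y - x) < d \<Longrightarrow> norm (g y - g x - L (y - x)) \<le> e * norm (y - x)"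
    and e: "0 \<le> e" and h: "0 < h" and hd: "h * (2 * norm a + norm b) < d"
  shows "\<bar>f (x + h *\<^sub>R a + h *\<^sub>R b) - f (x + h *\<^sub>R a) - f (x + h *\<^sub>R b) + f x - h\<^sup>2 * (a \<bullet> L b)\<bar>
           \<le> h\<^sup>2 * (e * norm a * (2 * norm a + norm b))"
proof -
  define \<psi> where "\<psi> s = f (x + h *\<^sub>R b + s *\<^sub>R a) - f (x + s *\<^sub>R a) - s * (h * (a \<bullet> L b))" for s
  define \<psi>' where "\<psi>' s t = t * ((g (x + s *\<^sub>R a + h *\<^sub>R b) - g (x + s *\<^sub>R a)) \<bullet> a - h * (a \<bullet> L b))"
    for s t
  have shift: "((\<lambda>s. f (y + s *\<^sub>R a)) has_derivative (\<lambda>t. g (y + s *\<^sub>R a) \<bullet> (t *\<^sub>R a))) (at s)"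
    for y s
  proof -
    have "((\<lambda>s. y + s *\<^sub>R a) has_derivative (\<lambda>t. t *\<^sub>R a)) (at s)"
      by (auto intro!: derivative_eq_intros)
    from has_derivative_compose[OF this df] show ?thesis .
  qed
  have der: "(\<psi> has_derivative \<psi>' s) (at s)" for s
  proof -
    have "(\<psi> has_derivative (\<lambda>t. g (x + h *\<^sub>R b + s *\<^sub>R a) \<bullet> (t *\<^sub>R a)
        - g (x + s *\<^sub>R a) \<bullet> (t *\<^sub>R a) - t * (h * (a \<bullet> L b)))) (at s)"
      unfolding \<psi>_def
      by (intro has_derivative_diff shift[of "x + h *\<^sub>R b"] shift[of x]
          has_derivative_mult_left has_derivative_ident)
    then show ?thesis
      by (rule has_derivative_eq_rhs) (simp add: \<psi>'_def fun_eq_iff inner_commute algebra_simps)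
  qed
  have "continuous_on {0..h} \<psi>"
    using der has_derivative_continuous continuous_at_imp_continuous_on by blast
  then obtain \<xi> where \<xi>: "\<xi> \<in> {0<..<h}" and mv: "norm (\<psi> h - \<psi> 0) \<le> norm (\<psi>' \<xi> (h - 0))"
    using mvt_general[OF h _ der] by blast
  have "\<bar>\<psi>' \<xi> h\<bar> \<le> h * (h * (e * norm a * (2 * norm a + norm b)))"
  proof -
    have "\<bar>(g (x + \<xi> *\<^sub>R a + h *\<^sub>R b) - g (x + \<xi> *\<^sub>R a)) \<bullet> a - h * (a \<bullet> L b)\<bar>
        \<le> h * (e * norm a * (2 * norm a + norm b))"
      using \<xi> by (intro gradient_increment_estimate[OF L r e _ _ hd]) auto
    then show ?thesis
      unfolding \<psi>'_def abs_mult using h by (simp add: mult_left_mono)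
  qed
  moreover have "\<psi> h - \<psi> 0 = f (x + h *\<^sub>R a + h *\<^sub>R b) - f (x + h *\<^sub>R a) - f (x + h *\<^sub>R b) + f x - h\<^sup>2 * (a \<bullet> L b)"
    unfolding \<psi>_def by (simp add: power2_eq_square ac_simps)
  ultimately show ?thesis
    using mv by (simp add: power2_eq_square mult.assoc)
qed

lemma abs_le_eps_mult_imp_zero:
  fixes z K :: real
  assumes K: "0 \<le> K" and small: "\<And>e. 0 < e \<Longrightarrow> \<bar>z\<bar> \<le> e * K"
  shows "z = 0"
proof (rule ccontr)
  assume "z \<noteq> 0"
  then have z: "0 < \<bar>z\<bar>" by simp
  have "\<bar>z\<bar> \<le> (\<bar>z\<bar> / (K + 1)) * K" using small[of "\<bar>z\<bar> / (K + 1)"] z K by simp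
  also have "\<dots> < \<bar>z\<bar>" using z K by (simp add: field_simps)
  finally show False by simp
qed

text \<open>Peano's form of Schwarz's theorem: differentiability of the gradient at the single point
  \<open>x\<close> suffices, because \<open>\<langle>a, L b\<rangle>\<close> and \<open>\<langle>b, L a\<rangle>\<close> are both the limit of the second difference
  \<open>(f (x + h a + h b) - f (x + h a) - f (x + h b) + f x) / h\<^sup>2\<close>, which is symmetric in \<open>a, b\<close>.\<close>
lemma gradient_derivative_symmetric:
  fixes f :: "'a::real_inner \<Rightarrow> real"
  assumes df: "\<And>y. (f has_derivative (\<lambda>v. g y \<bullet> v)) (at y)" and dg: "(g has_derivative L) (at x)"
  shows "a \<bullet> L b = b \<bullet> L a"
proof -
  have L: "linear L" using dg has_derivative_linear by blast
  define K1 where "K1 = norm a * (2 * norm a + norm b)"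
  define K2 where "K2 = norm b * (2 * norm b + norm a)"
  show ?thesis
  proof (rule abs_le_eps_mult_imp_zero[of "K1 + K2" "a \<bullet> L b - b \<bullet> L a", simplified])
    show "0 \<le> K1 + K2" unfolding K1_def K2_def by simp
    fix e :: real
    assume e: "0 < e"
    obtain d where d: "0 < d"
      and r: "\<And>y. norm (y - x) < d \<Longrightarrow> norm (g y - g x - L (y - x)) \<le> e * norm (y - x)"
      using dg e unfolding has_derivative_at_alt by blast
    define M where "M = 2 * (norm a + norm b) + 1"
    have M: "0 < M" unfolding M_def by (intro add_nonneg_pos) simp_all
    define h where "h = d / M"
    have h: "0 < h" using d M by (simp add: h_def)
    have "h * (2 * norm a + norm b) < h * M" "h * (2 * norm b + norm a) < h * M"
      using h unfolding M_def by (simp_all add: add_nonneg_pos)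
    moreover have "h * M = d" using M by (simp add: h_def)
    ultimately have hab: "h * (2 * norm a + norm b) < d" and hba: "h * (2 * norm b + norm a) < d"
      by simp_all
    define \<Delta> where "\<Delta> = f (x + h *\<^sub>R a + h *\<^sub>R b) - f (x + h *\<^sub>R a) - f (x + h *\<^sub>R b) + f x"
    have "\<bar>\<Delta> - h\<^sup>2 * (a \<bullet> L b)\<bar> \<le> h\<^sup>2 * (e * K1)"
      using second_difference_estimate[OF df L r _ h hab] e unfolding \<Delta>_def K1_def
      by (simp add: mult.assoc)
    moreover have "\<bar>\<Delta> - h\<^sup>2 * (b \<bullet> L a)\<bar> \<le> h\<^sup>2 * (e * K2)"
      using second_difference_estimate[OF df L r _ h hba] e unfolding \<Delta>_def K2_def
      by (simp add: ac_simps)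
    ultimately have "\<bar>h\<^sup>2 * (a \<bullet> L b - b \<bullet> L a)\<bar> \<le> h\<^sup>2 * (e * (K1 + K2))"
      by (simp add: abs_le_iff algebra_simps)
    then have "h\<^sup>2 * \<bar>a \<bullet> L b - b \<bullet> L a\<bar> \<le> h\<^sup>2 * (e * (K1 + K2))"
      by (simp add: abs_mult)
    then show "\<bar>a \<bullet> L b - b \<bullet> L a\<bar> \<le> e * (K1 + K2)"
      using h by simp
  qed
qed

lemma transpose_outer_skew:
  "transpose (k *\<^sub>R (outer p q - outer q p)) = - (k *\<^sub>R (outer p q - outer q p))"
  by (simp add: vec_eq_iff transpose_def outer_def algebra_simps)

lemma outer_skew_mult_vec:
  "(k *\<^sub>R (outer p q - outer q p)) *v v = k *\<^sub>R ((q \<bullet> v) *\<^sub>R p - (p \<bullet> v) *\<^sub>R q)"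
  by (simp add: vec_eq_iff matrix_vector_mult_def outer_def inner_vec_def sum_distrib_left
      sum_subtractf algebra_simps)

lemma bracket_outer_skew:
  assumes "J = (\<lambda>w. k *\<^sub>R (outer u (V w) - outer (V w) u))"
  shows "bracket J F G =
    (\<lambda>w. k * ((u \<bullet> grad F w) * (V w \<bullet> grad G w) - (V w \<bullet> grad F w) * (u \<bullet> grad G w)))"
  unfolding bracket_def assms outer_skew_mult_vec
  by (simp add: fun_eq_iff algebra_simps inner_commute)

lemma inner_grad_bracket_outer_skew:
  fixes A :: "real^'n^'n" and G H :: "real^'n \<Rightarrow> real"
  assumes J: "J = (\<lambda>w. k *\<^sub>R (outer u (A *v w) - outer (A *v w) u))"
    and dG: "\<And>y. G differentiable (at y)" and dH: "\<And>y. H differentiable (at y)"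
    and G': "(grad G has_derivative G') (at w)" and H': "(grad H has_derivative H') (at w)"
  shows "v \<bullet> grad (bracket J G H) w =
    k * ((u \<bullet> G' v) * ((A *v w) \<bullet> grad H w) + (u \<bullet> grad G w) * ((A *v v) \<bullet> grad H w + (A *v w) \<bullet> H' v)
      - ((A *v v) \<bullet> grad G w + (A *v w) \<bullet> G' v) * (u \<bullet> grad H w) - ((A *v w) \<bullet> grad G w) * (u \<bullet> H' v))"
proof -
  have A: "((\<lambda>w. A *v w) has_derivative (\<lambda>v. A *v v)) (at w)"
    using bounded_linear_imp_has_derivative[OF matrix_vector_mul_bounded_linear[of A]] by simp
  have "(bracket J G H has_derivative (\<lambda>v.
    k * ((u \<bullet> G' v) * ((A *v w) \<bullet> grad H w) + (u \<bullet> grad G w) * ((A *v v) \<bullet> grad H w + (A *v w) \<bullet> H' v)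
      - ((A *v v) \<bullet> grad G w + (A *v w) \<bullet> G' v) * (u \<bullet> grad H w) - ((A *v w) \<bullet> grad G w) * (u \<bullet> H' v)))) (at w)"
    unfolding bracket_outer_skew[OF J]
    by (rule has_derivative_eq_rhs, (rule derivative_intros G' H' A)+)
      (simp add: algebra_simps fun_eq_iff inner_commute)
  then show ?thesis by (subst inner_commute) (rule inner_grad_eq)
qed

lemma jacobi_bracket_outer_skew:
  fixes A :: "real^'n^'n" and u :: "real^'n"
  assumes Au: "A *v u = 0"
    and J: "J = (\<lambda>w. k *\<^sub>R (outer u (A *v w) - outer (A *v w) u))"
    and "C2 F" "C2 G" "C2 H"
  shows "bracket J F (bracket J G H) w + bracket J G (bracket J H F) w
    + bracket J H (bracket J F G) w = 0"
proof -
  define b where "b = A *v w"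
  define D where "D F = frechet_derivative (grad F) (at w)" for F :: "real^'n \<Rightarrow> real"
  define du where "du F = u \<bullet> grad F w" for F
  define db where "db F = b \<bullet> grad F w" for F
  define dAb where "dAb F = (A *v b) \<bullet> grad F w" for F
  define duu where "duu F = u \<bullet> D F u" for F
  define dub where "dub F = u \<bullet> D F b" for F
  define dbb where "dbb F = b \<bullet> D F b" for F
  have diff: "F differentiable (at y)" if "C2 F"
    for F :: "real^'n \<Rightarrow> real" and y
    using that unfolding C2_def by blast
  have D: "(grad F has_derivative D F) (at w)" if "C2 F" for F
    using that frechet_derivative_works unfolding C2_def D_def by blast
  have commute: "b \<bullet> D F u = u \<bullet> D F b" if "C2 F" for F
    using gradient_derivative_symmetric[OF has_derivative_grad[OF diff[OF that]] D[OF that]] .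
  have nested: "bracket J F (bracket J G H) w =
      k * (du F * (k * (dub G * db H + du G * (dAb H + dbb H) - (dAb G + dbb G) * du H - db G * dub H))
        - db F * (k * (duu G * db H + du G * dub H - dub G * du H - db G * duu H)))"
    if "C2 G" "C2 H" for F G H
    unfolding bracket_outer_skew[OF J, of F] b_def[symmetric]
    using inner_grad_bracket_outer_skew[OF J diff[OF that(1)] diff[OF that(2)] D[OF that(1)] D[OF that(2)]]
      commute[OF that(1)] commute[OF that(2)] Au
    by (simp add: du_def db_def dAb_def duu_def dub_def dbb_def b_def)
  show ?thesis
    using assms(3-5) by (simp add: nested algebra_simps)
qed

theorem theoremA2:
  fixes A :: "real^'d^'d" and w0 :: "real^'d" and c :: real
    and E :: "real^'d \<Rightarrow> real" and J :: "real^'d \<Rightarrow> real^'d^'d"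
  assumes "w0 \<noteq> 0" and "A *v w0 = 0" and "transpose A *v w0 = 0"
    and E_def: "E = (\<lambda>w. c - w0 \<bullet> w)"
    and J_def: "J = (\<lambda>w. (1 / (2 * (norm w0)^2)) *\<^sub>R (outer w0 (A *v w) - outer (A *v w) w0))"
  shows "(\<forall>w. transpose (J w) = - J w)
    \<and> (\<forall>G1 G2 G3. C2 G1 \<and> C2 G2 \<and> C2 G3 \<longrightarrow>
         (\<forall>w. bracket J G1 (bracket J G2 G3) w + bracket J G2 (bracket J G3 G1) w
              + bracket J G3 (bracket J G1 G2) w = 0))
    \<and> (\<forall>w. (1/2) *\<^sub>R (A *v w) = J w *v grad E w)"
proof -
  define k where "k = 1 / (2 * (norm w0)\<^sup>2)"
  have J: "J = (\<lambda>w. k *\<^sub>R (outer w0 (A *v w) - outer (A *v w) w0))"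
    using J_def k_def by simp
  have grad_E: "grad E w = - w0" for w
    unfolding E_def by (rule grad_eqI) (auto intro!: derivative_eq_intros)
  have orth: "(A *v w) \<bullet> w0 = 0" for w
    using assms(3) by (simp add: inner_commute dot_lmul_matrix[symmetric])
  have "(1/2) *\<^sub>R (A *v w) = J w *v grad E w" for w
    unfolding J grad_E outer_skew_mult_vec using orth[of w] assms(1)
    by (simp add: k_def power2_norm_eq_inner)
  then show ?thesis
    using J transpose_outer_skew jacobi_bracket_outer_skew[OF assms(2) J] by auto
qed

end
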